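(* Let $a,b>0$, $0<c<1$, $0<p<1$, and consider, with the fear parameter $q>0$ as bifurcation parameter, $$\frac{dx}{dt}=x\left[\frac{(1-x)(x-p)}{1+qy}-ay\right],\qquad \frac{dy}{dt}=by\,(1-y-cx).$$ Let $$q_*=\frac{a^2c^2+2acp+2ac+p^2-4a-2p+1}{4a(c^2p-cp-c+1)},$$ and assume $q_*>0$ and $2A_1+A_2>0$ at $q=q_*$, where $A_1=ac^2q+1$, $A_2=-(2acq+ac+p+1)$. Let $E_{3*}=(x_3,1-cx_3)$ with $x_3=-A_2/(2A_1)$ evaluated at $q=q_*$. Then the system undergoes a saddle-node bifurcation at $E_{3*}$ at the threshold $q=q_{SN}=q_*$ (the transversality conditions of Sotomayor's theorem for a saddle-node bifurcation hold).
   Context: At $q=q_*$ the discriminant $\Delta=A_2^2-4A_1A_3$ (with $A_3=a+aq+p$) vanishes, so the two interior equilibria $E_{1*},E_{2*}$ coalesce into $E_{3*}$. *)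

theory Defs
  imports "HOL-Analysis.Analysis"
begin

definition fx :: "real \<Rightarrow> real \<Rightarrow> real \<Rightarrow> real \<Rightarrow> real \<Rightarrow> real" where
  "fx a p q x y = x * ((1 - x) * (x - p) / (1 + q * y) - a * y)"

definition fy :: "real \<Rightarrow> real \<Rightarrow> real \<Rightarrow> real \<Rightarrow> real" where
  "fy b c x y = b * y * (1 - y - c * x)"

definition qstar :: "real \<Rightarrow> real \<Rightarrow> real \<Rightarrow> real" where
  "qstar a c p = (a^2 * c^2 + 2*a*c*p + 2*a*c + p^2 - 4*a - 2*p + 1)
                 / (4 * a * (c^2 * p - c * p - c + 1))"

definition A1 :: "real \<Rightarrow> real \<Rightarrow> real \<Rightarrow> real" where
  "A1 a c q = a * c^2 * q + 1"

definition A2 :: "real \<Rightarrow> real \<Rightarrow> real \<Rightarrow> real \<Rightarrow> real" where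
  "A2 a c p q = - (2 * a * c * q + a * c + p + 1)"

definition pdx :: "(real \<Rightarrow> real \<Rightarrow> real) \<Rightarrow> real \<Rightarrow> real \<Rightarrow> real" where
  "pdx g x0 y0 = deriv (\<lambda>s. g s y0) x0"

definition pdy :: "(real \<Rightarrow> real \<Rightarrow> real) \<Rightarrow> real \<Rightarrow> real \<Rightarrow> real" where
  "pdy g x0 y0 = deriv (\<lambda>s. g x0 s) y0"

text \<open>Second derivative of g at (x0,y0) applied to (v,v): D^2 g(x0,y0)(v,v)
  = d^2/ds^2 g((x0,y0) + s v) at s = 0.\<close>
definition D2 :: "(real \<Rightarrow> real \<Rightarrow> real) \<Rightarrow> real \<Rightarrow> real \<Rightarrow> real \<Rightarrow> real \<Rightarrow> real" where
  "D2 g x0 y0 v1 v2 = deriv (deriv (\<lambda>s. g (x0 + s * v1) (y0 + s * v2))) 0"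

end

theory Submission
  imports Defs
begin

text \<open>On the predator nullcline \<open>y = 1 - c x\<close> the prey equation reads
  \<open>fx = - x (A1 x\<^sup>2 + A2 x + A3) / (1 + q y)\<close>, and \<open>q = q\<^sub>*\<close> is exactly the value for which
  this quadratic becomes the perfect square \<open>A1 (x - x3)\<^sup>2\<close>. Hence \<open>E3*\<close> is an equilibrium at
  which \<open>fx\<close> vanishes to second order along the nullcline, while \<open>fy\<close> vanishes on it identically.
  Both rows of the Jacobian therefore annihilate the tangent \<open>v = (1, -c)\<close>, the left null vector
  is \<open>w = (J22, -J12)\<close>, and \<open>w \<cdot> D\<^sup>2F(v, v) = J22 (-2 x3 A1 / (1 + q y3)) \<noteq> 0\<close>. Since \<open>fy\<close> does
  not depend on \<open>q\<close>, \<open>w \<cdot> F\<^sub>q = J22 \<partial>fx/\<partial>q = J22 (- a x3 y3\<^sup>2 / (1 + q y3)) \<noteq> 0\<close>.\<close>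

lemma quadratic_double_root:
  fixes \<alpha> \<beta> \<gamma> x :: real
  assumes "\<alpha> \<noteq> 0" and "\<beta>^2 = 4 * \<alpha> * \<gamma>"
  shows "\<alpha> * x^2 + \<beta> * x + \<gamma> = \<alpha> * (x + \<beta> / (2 * \<alpha>))^2"
  using assms by (simp add: field_simps power2_eq_square)

lemma qstar_discriminant_zero:
  assumes "a \<noteq> 0" and "c \<noteq> 1" and "c * p \<noteq> 1"
  shows "(A2 a c p (qstar a c p))^2 = 4 * A1 a c (qstar a c p) * (a + a * qstar a c p + p)"
proof -
  have "4 * a * (c^2 * p - c * p - c + 1) = 4 * a * (1 - c) * (1 - c * p)"
    by (simp add: algebra_simps power2_eq_square)
  then have "4 * a * (c^2 * p - c * p - c + 1) \<noteq> 0"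
    using assms by simp
  then have "4 * a * (c^2 * p - c * p - c + 1) * qstar a c p
      = a^2 * c^2 + 2*a*c*p + 2*a*c + p^2 - 4*a - 2*p + 1"
    unfolding qstar_def by simp
  then show ?thesis
    unfolding A1_def A2_def by (simp add: algebra_simps power2_eq_square)
qed

lemma fx_predator_nullcline:
  assumes "1 + q * (1 - c * x) \<noteq> 0"
  shows "fx a p q x (1 - c * x)
    = - x * (A1 a c q * x^2 + A2 a c p q * x + (a + a * q + p)) / (1 + q * (1 - c * x))"
  using assms unfolding fx_def A1_def A2_def
  by (simp add: field_simps power2_eq_square)

lemma pdx_fx:
  assumes "1 + q * y \<noteq> 0"
  shows "pdx (fx a p q) x y = (1 - x) * (x - p) / (1 + q * y) - a * y + x * (1 + p - 2 * x) / (1 + q * y)"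
proof -
  have "((\<lambda>s. fx a p q s y) has_real_derivative
      (1 - x) * (x - p) / (1 + q * y) - a * y + x * (1 + p - 2 * x) / (1 + q * y)) (at x)"
    unfolding fx_def using assms
    by (auto intro!: derivative_eq_intros simp: field_simps)
  then show ?thesis unfolding pdx_def by (rule DERIV_imp_deriv)
qed

lemma pdy_fx:
  assumes "1 + q * y \<noteq> 0"
  shows "pdy (fx a p q) x y = - x * (q * ((1 - x) * (x - p)) / (1 + q * y)^2 + a)"
proof -
  have "((\<lambda>s. fx a p q x s) has_real_derivative
      - x * (q * ((1 - x) * (x - p)) / (1 + q * y)^2 + a)) (at y)"
    unfolding fx_def using assms
    by (auto intro!: derivative_eq_intros) (simp add: field_simps power2_eq_square)
  then show ?thesis unfolding pdy_def by (rule DERIV_imp_deriv)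
qed

lemma deriv_fx_fear:
  assumes "1 + q * y \<noteq> 0"
  shows "deriv (\<lambda>q. fx a p q x y) q = - x * y * ((1 - x) * (x - p)) / (1 + q * y)^2"
proof -
  have "((\<lambda>q. fx a p q x y) has_real_derivative
      - x * y * ((1 - x) * (x - p)) / (1 + q * y)^2) (at q)"
    unfolding fx_def using assms
    by (auto intro!: derivative_eq_intros simp: field_simps power2_eq_square)
  then show ?thesis by (rule DERIV_imp_deriv)
qed

lemma pdx_fy: "pdx (fy b c) x y = - b * c * y"
proof -
  have "((\<lambda>s. fy b c s y) has_real_derivative - b * c * y) (at x)"
    unfolding fy_def by (auto intro!: derivative_eq_intros)
  then show ?thesis unfolding pdx_def by (rule DERIV_imp_deriv)
qed

lemma pdy_fy: "pdy (fy b c) x y = b * (1 - 2 * y - c * x)"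
proof -
  have "((\<lambda>s. fy b c x s) has_real_derivative b * (1 - 2 * y - c * x)) (at y)"
    unfolding fy_def by (auto intro!: derivative_eq_intros simp: algebra_simps)
  then show ?thesis unfolding pdy_def by (rule DERIV_imp_deriv)
qed

lemma D2_fy_predator_nullcline: "D2 (fy b c) x (1 - c * x) 1 (- c) = 0"
proof -
  have "(\<lambda>s. fy b c (x + s * 1) (1 - c * x + s * - c)) = (\<lambda>s. 0)"
    unfolding fy_def by (simp add: algebra_simps)
  then show ?thesis unfolding D2_def by simp
qed

lemma deriv2_at_double_zero:
  fixes f h h' :: "real \<Rightarrow> real"
  assumes "eventually (\<lambda>s. f s = s^2 * h s) (nhds 0)"
    and "open S" and "0 \<in> S"
    and "\<And>s. s \<in> S \<Longrightarrow> (h has_real_derivative h' s) (at s)" and "isCont h' 0"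
  shows "deriv (deriv f) 0 = 2 * h 0"
proof -
  have "deriv (deriv f) 0 = (deriv ^^ 2) f 0"
    by (simp add: numeral_2_eq_2)
  also have "\<dots> = (deriv ^^ 2) (\<lambda>s. s^2 * h s) 0"
    using assms(1) by (rule higher_deriv_cong_ev) simp
  also have "\<dots> = deriv (deriv (\<lambda>s. s^2 * h s)) 0"
    by (simp add: numeral_2_eq_2)
  also have "\<dots> = deriv (\<lambda>s. s * (2 * h s + s * h' s)) 0"
  proof (rule deriv_cong_ev)
    show "eventually (\<lambda>s. deriv (\<lambda>s. s^2 * h s) s = s * (2 * h s + s * h' s)) (nhds 0)"
      using eventually_nhds_in_open[OF assms(2,3)]
    proof (rule eventually_mono)
      fix s assume "s \<in> S"
      then have "((\<lambda>s. s^2 * h s) has_real_derivative s * (2 * h s + s * h' s)) (at s)"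
        using assms(4) by (auto intro!: derivative_eq_intros simp: algebra_simps power2_eq_square)
      then show "deriv (\<lambda>s. s^2 * h s) s = s * (2 * h s + s * h' s)"
        by (rule DERIV_imp_deriv)
    qed
  qed simp
  also have "\<dots> = 2 * h 0"
  proof (rule DERIV_imp_deriv)
    have "isCont h 0"
      using assms(4)[OF assms(3)] by (rule DERIV_isCont)
    then have "isCont (\<lambda>s. 2 * h s + s * h' s) 0"
      using assms(5) by (intro continuous_intros)
    then show "((\<lambda>s. s * (2 * h s + s * h' s)) has_real_derivative 2 * h 0) (at 0)"
      unfolding CARAT_DERIV by (intro exI[of _ "\<lambda>s. 2 * h s + s * h' s"]) simp
  qed
  finally show ?thesis .
qed

locale fear_saddle_node =
  fixes a b c p :: real
  assumes a_pos: "a > 0" and b_pos: "b > 0" and c_pos: "0 < c" and c_lt_1: "c < 1"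
    and p_pos: "0 < p" and p_lt_1: "p < 1"
    and qstar_pos: "qstar a c p > 0"
    and A1_A2_pos: "2 * A1 a c (qstar a c p) + A2 a c p (qstar a c p) > 0"
begin

definition qs :: real where "qs = qstar a c p"
definition x3 :: real where "x3 = - A2 a c p qs / (2 * A1 a c qs)"
definition y3 :: real where "y3 = 1 - c * x3"
definition den :: real where "den = 1 + qs * y3"

lemma A1_pos: "A1 a c qs > 0"
  using qstar_pos a_pos c_pos unfolding qs_def A1_def by (intro add_pos_pos mult_pos_pos) simp_all

lemma x3_A1_A2: "2 * A1 a c qs * x3 = - A2 a c p qs"
  using A1_pos unfolding x3_def by (simp add: field_simps)

lemma x3_pos: "x3 > 0"
proof -
  have "a * c * qs > 0" "a * c > 0"
    using qstar_pos a_pos c_pos unfolding qs_def by simp_all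
  then have "A2 a c p qs < 0"
    using p_pos unfolding A2_def by linarith
  then show ?thesis
    using A1_pos unfolding x3_def by (simp add: divide_neg_pos)
qed

lemma x3_lt_1: "x3 < 1"
proof -
  have "2 * A1 a c qs * x3 < 2 * A1 a c qs * 1"
    using A1_A2_pos x3_A1_A2 unfolding qs_def by simp
  then show ?thesis
    using A1_pos by simp
qed

lemma y3_pos: "y3 > 0"
proof -
  have "c * x3 < 1 * 1"
    using c_pos c_lt_1 x3_pos x3_lt_1 by (intro mult_strict_mono) auto
  then show ?thesis
    unfolding y3_def by simp
qed

lemma den_pos: "den > 0"
  using qstar_pos y3_pos unfolding den_def qs_def by (simp add: add_pos_pos)

lemma prey_quadratic_double_root:
  "A1 a c qs * x^2 + A2 a c p qs * x + (a + a * qs + p) = A1 a c qs * (x - x3)^2"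
proof -
  have "c * p < 1 * 1"
    using c_pos c_lt_1 p_pos p_lt_1 by (intro mult_strict_mono) auto
  then have "(A2 a c p qs)^2 = 4 * A1 a c qs * (a + a * qs + p)"
    using qstar_discriminant_zero[of a c p] a_pos c_lt_1 unfolding qs_def by simp
  then show ?thesis
    using quadratic_double_root[of "A1 a c qs"] A1_pos unfolding x3_def by simp
qed

lemma fx_predator_nullcline_double_root:
  assumes "1 + qs * (1 - c * x) \<noteq> 0"
  shows "fx a p qs x (1 - c * x) = - x * (A1 a c qs * (x - x3)^2) / (1 + qs * (1 - c * x))"
  using fx_predator_nullcline[where a = a and p = p, OF assms]
  unfolding prey_quadratic_double_root .

lemma fx_equilibrium: "fx a p qs x3 y3 = 0"
  using fx_predator_nullcline_double_root[of x3] den_pos unfolding den_def y3_def by simp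

lemma fy_equilibrium: "fy b c x3 y3 = 0"
  unfolding fy_def y3_def by simp

lemma prey_growth_balance: "(1 - x3) * (x3 - p) = a * y3 * den"
proof -
  have "x3 * ((1 - x3) * (x3 - p) / den - a * y3) = 0"
    using fx_equilibrium unfolding fx_def den_def by simp
  then have "(1 - x3) * (x3 - p) / den = a * y3"
    using x3_pos by simp
  then show ?thesis
    using den_pos by (simp add: field_simps)
qed

text \<open>The \<open>x\<close>-derivative at \<open>x3\<close> of the identity
  \<open>(1 - x) (x - p) - a y (1 + q y) = - A1 (x - x3)\<^sup>2\<close> on \<open>y = 1 - c x\<close>.\<close>
lemma prey_gap_deriv_zero: "1 + p - 2 * x3 = - a * c * (qs * y3 + den)"
  using x3_A1_A2 unfolding A1_def A2_def den_def y3_def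
  by (simp add: algebra_simps power2_eq_square)

lemma pdx_fx_eq_c_pdy: "pdx (fx a p qs) x3 y3 = c * pdy (fx a p qs) x3 y3"
proof -
  have "den \<noteq> 0" using den_pos by simp
  then have "pdx (fx a p qs) x3 y3 = x3 * (1 + p - 2 * x3) / den"
    using pdx_fx[of qs y3 a p x3, folded den_def, unfolded prey_growth_balance] by simp
  moreover have "pdy (fx a p qs) x3 y3 = - a * x3 * (qs * y3 + den) / den"
    using pdy_fx[of qs y3 a p x3, folded den_def, unfolded prey_growth_balance] \<open>den \<noteq> 0\<close>
    by (simp add: field_simps power2_eq_square)
  ultimately show ?thesis
    unfolding prey_gap_deriv_zero by simp
qed

lemma pdx_fy_eq_c_pdy: "pdx (fy b c) x3 y3 = c * pdy (fy b c) x3 y3"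
  unfolding pdx_fy pdy_fy y3_def by (simp add: algebra_simps)

lemma pdy_fy_nonzero: "pdy (fy b c) x3 y3 \<noteq> 0"
  using b_pos y3_pos unfolding pdy_fy y3_def by (simp add: algebra_simps)

lemma fear_derivative_nonzero: "deriv (\<lambda>q. fx a p q x3 y3) qs \<noteq> 0"
proof -
  have "deriv (\<lambda>q. fx a p q x3 y3) qs = - a * x3 * y3^2 / den"
    using deriv_fx_fear[of qs y3 a p x3, folded den_def, unfolded prey_growth_balance] den_pos
    by (simp add: field_simps power2_eq_square)
  then show ?thesis
    using a_pos x3_pos y3_pos den_pos by simp
qed

lemma D2_fx_tangent: "D2 (fx a p qs) x3 y3 1 (- c) = - 2 * x3 * A1 a c qs / den"
proof -
  define h where "h s = - (x3 + s) * A1 a c qs / (1 + qs * (y3 - c * s))" for s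
  \<comment> \<open>\<open>y3 + c * x3 = 1\<close>; left unsimplified so that the quotient rule is a field identity.\<close>
  define h' where "h' s = - A1 a c qs * (1 + qs * (y3 + c * x3)) / (1 + qs * (y3 - c * s))^2" for s
  define S where "S = {s. 1 + qs * (y3 - c * s) > 0}"
  have "open S"
    unfolding S_def by (intro open_Collect_less continuous_intros)
  have "0 \<in> S"
    using den_pos unfolding S_def den_def by simp
  have h_deriv: "(h has_real_derivative h' s) (at s)" if "s \<in> S" for s
    using that unfolding S_def h_def h'_def
    by (auto intro!: derivative_eq_intros simp: field_simps power2_eq_square)
  have h'_cont: "isCont h' 0"
    using den_pos unfolding h'_def den_def by (intro continuous_intros) simp
  have fx_tangent_ev: "eventually (\<lambda>s. fx a p qs (x3 + s * 1) (y3 + s * - c) = s^2 * h s) (nhds 0)"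
    using eventually_nhds_in_open[OF \<open>open S\<close> \<open>0 \<in> S\<close>]
  proof (rule eventually_mono)
    fix s assume "s \<in> S"
    then have "1 + qs * (1 - c * (x3 + s)) > 0"
      unfolding S_def y3_def by (simp add: algebra_simps)
    moreover have "y3 + s * - c = 1 - c * (x3 + s)"
      unfolding y3_def by (simp add: algebra_simps)
    ultimately show "fx a p qs (x3 + s * 1) (y3 + s * - c) = s^2 * h s"
      using fx_predator_nullcline_double_root[of "x3 + s"] unfolding h_def y3_def by (simp add: algebra_simps)
  qed
  have "D2 (fx a p qs) x3 y3 1 (- c) = 2 * h 0"
    unfolding D2_def
    using deriv2_at_double_zero[OF fx_tangent_ev \<open>open S\<close> \<open>0 \<in> S\<close> h_deriv h'_cont] .
  then show ?thesis
    unfolding h_def den_def by simp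
qed

end

theorem theorem5p2:
  fixes a b c p :: real
  assumes "a > 0" and "b > 0" and "0 < c" and "c < 1" and "0 < p" and "p < 1"
    and "qstar a c p > 0"
    and "2 * A1 a c (qstar a c p) + A2 a c p (qstar a c p) > 0"
  defines "qs \<equiv> qstar a c p"
    and "x3 \<equiv> - A2 a c p (qstar a c p) / (2 * A1 a c (qstar a c p))"
  defines "y3 \<equiv> 1 - c * x3"
  defines "J11 \<equiv> pdx (fx a p qs) x3 y3" and "J12 \<equiv> pdy (fx a p qs) x3 y3"
    and "J21 \<equiv> pdx (fy b c) x3 y3" and "J22 \<equiv> pdy (fy b c) x3 y3"
    and "Fq1 \<equiv> deriv (\<lambda>q. fx a p q x3 y3) qs"
    and "Fq2 \<equiv> deriv (\<lambda>q. fy b c x3 y3) qs"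
  shows "fx a p qs x3 y3 = 0 \<and> fy b c x3 y3 = 0 \<and>
         J11 * J22 - J12 * J21 = 0 \<and>
         (\<exists>v1 v2 w1 w2. (v1, v2) \<noteq> (0, 0) \<and> (w1, w2) \<noteq> (0, 0) \<and>
            J11 * v1 + J12 * v2 = 0 \<and> J21 * v1 + J22 * v2 = 0 \<and>
            w1 * J11 + w2 * J21 = 0 \<and> w1 * J12 + w2 * J22 = 0 \<and>
            w1 * Fq1 + w2 * Fq2 \<noteq> 0 \<and>
            w1 * D2 (fx a p qs) x3 y3 v1 v2 + w2 * D2 (fy b c) x3 y3 v1 v2 \<noteq> 0)"
proof -
  interpret E: fear_saddle_node a b c p
    using assms(1-8) by unfold_locales
  have point: "qs = E.qs" "x3 = E.x3" "y3 = E.y3"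
    unfolding qs_def x3_def y3_def E.qs_def E.x3_def E.y3_def by simp_all
  have J1: "J11 = c * J12" and J2: "J21 = c * J22" and "J22 \<noteq> 0"
    unfolding J11_def J12_def J21_def J22_def point
    by (rule E.pdx_fx_eq_c_pdy E.pdx_fy_eq_c_pdy E.pdy_fy_nonzero)+
  have "Fq1 \<noteq> 0" and "Fq2 = 0"
    unfolding Fq1_def Fq2_def point by (simp_all add: E.fear_derivative_nonzero)
  have D2_fx: "D2 (fx a p qs) x3 y3 1 (- c) \<noteq> 0"
    unfolding point E.D2_fx_tangent using E.x3_pos E.A1_pos E.den_pos by simp
  have D2_fy: "D2 (fy b c) x3 y3 1 (- c) = 0"
    unfolding y3_def by (rule D2_fy_predator_nullcline)
  have "\<exists>v1 v2 w1 w2. (v1, v2) \<noteq> (0, 0) \<and> (w1, w2) \<noteq> (0, 0) \<and>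
      J11 * v1 + J12 * v2 = 0 \<and> J21 * v1 + J22 * v2 = 0 \<and>
      w1 * J11 + w2 * J21 = 0 \<and> w1 * J12 + w2 * J22 = 0 \<and>
      w1 * Fq1 + w2 * Fq2 \<noteq> 0 \<and>
      w1 * D2 (fx a p qs) x3 y3 v1 v2 + w2 * D2 (fy b c) x3 y3 v1 v2 \<noteq> 0"
    by (rule exI[of _ 1], rule exI[of _ "- c"], rule exI[of _ J22], rule exI[of _ "- J12"])
      (simp add: J1 J2 D2_fx D2_fy \<open>J22 \<noteq> 0\<close> \<open>Fq1 \<noteq> 0\<close> \<open>Fq2 = 0\<close>)
  moreover have "fx a p qs x3 y3 = 0" and "fy b c x3 y3 = 0"
    unfolding point by (rule E.fx_equilibrium E.fy_equilibrium)+
  ultimately show ?thesis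
    unfolding J1 J2 by simp
qed

end
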